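(* There is an absolute constant $\tilde C\in\mathbb{R}^+$ such that the following holds. Fix $\epsilon,\eta\in(0,1/2)$ and $d\ge2$. Let $\mathcal{L}$ be an $r$-dimensional subspace of $\mathbb{C}^{n_1\times\cdots\times n_d}$ spanned by a basis of rank-one tensors $\mathcal{B}=\{\bigcirc_{\ell=1}^d\mathbf{y}^{(\ell)}_k:k\in[r]\}$ (with $\|\mathbf{y}^{(\ell)}_k\|_2=1$) whose modewise coherence satisfies $\mu_{\mathcal{B}}^{d-1}<1/(2r)$. For each $j\in[d]$ draw $\mathbf{A}_j\in\mathbb{C}^{m_j\times n_j}$ with $$m_j\ge\tilde C\cdot r^{2/d}d^2\epsilon^{-2}\ln(2r^2d/\eta)$$ from an $(\eta/d)$-optimal family of JL embedding distributions. Then with probability at least $1-\eta$, $$\big|\|\mathcal{Y}\times_1\mathbf{A}_1\cdots\times_d\mathbf{A}_d\|^2-\|\mathcal{Y}\|^2\big|\le\epsilon\|\mathcal{Y}\|^2\quad\text{for all }\mathcal{Y}\in\mathcal{L}.$$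
   Context: Tensors carry the inner product $\langle\mathcal{X},\mathcal{Y}\rangle=\sum\mathcal{X}_{i_1\dots i_d}\overline{\mathcal{Y}_{i_1\dots i_d}}$ and norm $\|\cdot\|$; $\bigcirc$ is the outer product; $(\mathcal{Z}\times_j\mathbf{U})_{i_1,\dots,\ell,\dots,i_d}=\sum_{i_j}\mathcal{Z}_{i_1,\dots,i_j,\dots,i_d}\mathbf{U}_{\ell,i_j}$. $\mu_{\mathcal{B}}=\max_{\ell\in[d]}\max_{k\ne h}|\langle\mathbf{y}^{(\ell)}_k,\mathbf{y}^{(\ell)}_h\rangle|$. A matrix $\mathbf{A}\in\mathbb{C}^{m\times n}$ is an $\epsilon$-JL embedding of $S$ if $\|\mathbf{A}x\|_2^2=(1+\epsilon_x)\|x\|_2^2$ with $\epsilon_x\in(-\epsilon,\epsilon)$ for all $x\in S$. For $\eta\in(0,1/2)$, a family $\{\mathcal{D}_{(m,n)}\}$ of distributions over $m\times n$ matrices is $\eta$-optimal if there is an absolute $C>0$ such that for all $\epsilon\in(0,1)$, $m<n$, and nonempty $S\subset\mathbb{C}^n$ with $|S|\le\eta\exp(\epsilon^2m/C)$, $\mathbf{A}\sim\mathcal{D}_{(m,n)}$ is an $\epsilon$-JL embedding of $S$ with probability at least $1-\eta$. *)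

theory Defs
  imports "HOL-Probability.Probability"
begin

text \<open>Indices are 0-based. A vector of \<open>\<complex>^n\<close> is a function
  \<open>nat \<Rightarrow> complex\<close> of which only the coordinates \<open>< n\<close> matter; an
  \<open>m \<times> n\<close> matrix is \<open>nat \<Rightarrow> nat \<Rightarrow> complex\<close> (entry \<open>A i j\<close>, \<open>i < m\<close>, \<open>j < n\<close>).
  A \<open>d\<close>-mode tensor of size \<open>n 0 \<times> \<dots> \<times> n (d-1)\<close> is a function on multi-indices
  \<open>(nat \<Rightarrow> nat)\<close>; only the multi-indices in \<open>tidx n d\<close> matter.\<close>

type_synonym cvec = "nat \<Rightarrow> complex"
type_synonym cmat = "nat \<Rightarrow> nat \<Rightarrow> complex"
type_synonym tensor = "(nat \<Rightarrow> nat) \<Rightarrow> complex"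

definition vinner :: "nat \<Rightarrow> cvec \<Rightarrow> cvec \<Rightarrow> complex" where
  "vinner n x y = (\<Sum>i<n. x i * cnj (y i))"

definition vnorm_sq :: "nat \<Rightarrow> cvec \<Rightarrow> real" where
  "vnorm_sq n x = (\<Sum>i<n. (cmod (x i))\<^sup>2)"

definition mat_vec :: "nat \<Rightarrow> cmat \<Rightarrow> cvec \<Rightarrow> cvec" where
  "mat_vec n A x = (\<lambda>i. \<Sum>j<n. A i j * x j)"

definition is_JL_embedding :: "real \<Rightarrow> nat \<Rightarrow> nat \<Rightarrow> cmat \<Rightarrow> cvec set \<Rightarrow> bool" where
  "is_JL_embedding \<epsilon> m n A S \<longleftrightarrow>
     (\<forall>x\<in>S. \<exists>e. -\<epsilon> < e \<and> e < \<epsilon> \<and> vnorm_sq m (mat_vec n A x) = (1 + e) * vnorm_sq n x)"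

text \<open>Probability (inner probability, to avoid measurability side conditions) that a
  property holds: some measurable event of probability at least \<open>p\<close> is contained in it.\<close>
definition holds_with_prob_ge :: "'a measure \<Rightarrow> ('a \<Rightarrow> bool) \<Rightarrow> real \<Rightarrow> bool" where
  "holds_with_prob_ge M P p \<longleftrightarrow>
     (\<exists>E\<in>sets M. E \<subseteq> {x\<in>space M. P x} \<and> measure M E \<ge> p)"

definition eta_optimal_with :: "real \<Rightarrow> real \<Rightarrow> (nat \<Rightarrow> nat \<Rightarrow> cmat measure) \<Rightarrow> bool" where
  "eta_optimal_with C \<eta> D \<longleftrightarrow>
     C > 0 \<and> (\<forall>m n. prob_space (D m n)) \<and>
     (\<forall>\<epsilon> m n S. 0 < \<epsilon> \<and> \<epsilon> < 1 \<and> m < n \<and> S \<noteq> {} \<and> finite S \<and>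
        real (card S) \<le> \<eta> * exp (\<epsilon>\<^sup>2 * real m / C) \<longrightarrow>
        holds_with_prob_ge (D m n) (\<lambda>A. is_JL_embedding \<epsilon> m n A S) (1 - \<eta>))"

definition eta_optimal :: "real \<Rightarrow> (nat \<Rightarrow> nat \<Rightarrow> cmat measure) \<Rightarrow> bool" where
  "eta_optimal \<eta> D \<longleftrightarrow> (\<exists>C. eta_optimal_with C \<eta> D)"

definition tidx :: "(nat \<Rightarrow> nat) \<Rightarrow> nat \<Rightarrow> (nat \<Rightarrow> nat) set" where
  "tidx n d = PiE {..<d} (\<lambda>l. {..<n l})"

definition tnorm_sq :: "(nat \<Rightarrow> nat) \<Rightarrow> nat \<Rightarrow> tensor \<Rightarrow> real" where
  "tnorm_sq n d X = (\<Sum>i\<in>tidx n d. (cmod (X i))\<^sup>2)"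

definition outer :: "nat \<Rightarrow> (nat \<Rightarrow> cvec) \<Rightarrow> tensor" where
  "outer d y = (\<lambda>i. \<Prod>l<d. y l (i l))"

definition mode_prod :: "tensor \<Rightarrow> nat \<Rightarrow> nat \<Rightarrow> cmat \<Rightarrow> tensor" where
  "mode_prod Z j nj U = (\<lambda>i. \<Sum>k<nj. Z (i(j := k)) * U (i j) k)"

primrec modes_prod :: "tensor \<Rightarrow> (nat \<Rightarrow> nat) \<Rightarrow> (nat \<Rightarrow> cmat) \<Rightarrow> nat \<Rightarrow> tensor" where
  "modes_prod Y n A 0 = Y"
| "modes_prod Y n A (Suc j) = mode_prod (modes_prod Y n A j) j (n j) (A j)"

definition coherence :: "(nat \<Rightarrow> nat) \<Rightarrow> nat \<Rightarrow> nat \<Rightarrow> (nat \<Rightarrow> nat \<Rightarrow> cvec) \<Rightarrow> real" where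
  "coherence n d r y =
     Max ({0} \<union> {cmod (vinner (n l) (y l k) (y l h)) | l k h. l < d \<and> k < r \<and> h < r \<and> k \<noteq> h})"

end

theory Submission
  imports Defs
begin

text \<open>Write Y = sum_k c_k y_k, where y_k is the outer product of the vectors y l k over the
  modes l. Both |Y|^2 and |Y x_1 A_1 ... x_d A_d|^2 are Hermitian forms in c whose kernels are
  the products over the modes of the Gram matrices <y l k, y l h>, resp.
  <A_l y l k, A_l y l h>. By polarization, an e-JL embedding of the 4 r^2 vectors
  y l k + i^p y l h moves every Gram entry by at most delta = 4 e, so the product kernel moves
  by at most (1 + delta)^d - 1 on the diagonal and (mu + delta)^d - mu^d off it, where mu is
  the coherence; for delta = eps / (9 d r^(1/d)) the total error is at most
  eps/2 sum_k |c_k|^2. The coherence bound makes the original kernel diagonally dominant,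
  whence |Y|^2 >= 1/2 sum_k |c_k|^2. With the stated m_j each A_j
  is such an embedding with probability 1 - eta/d, and independence of the modes gives
  probability (1 - eta/d)^d >= 1 - eta.\<close>

section \<open>Norms of linear combinations of rank-one tensors\<close>

definition outer_sum :: "nat \<Rightarrow> nat \<Rightarrow> (nat \<Rightarrow> complex) \<Rightarrow> (nat \<Rightarrow> nat \<Rightarrow> cvec) \<Rightarrow> tensor" where
  "outer_sum d r c z = (\<lambda>i. \<Sum>k<r. c k * outer d (\<lambda>l. z l k) i)"

definition sesq_form :: "nat \<Rightarrow> (nat \<Rightarrow> complex) \<Rightarrow> (nat \<Rightarrow> nat \<Rightarrow> complex) \<Rightarrow> complex" where
  "sesq_form r c K = (\<Sum>k<r. \<Sum>h<r. c k * cnj (c h) * K k h)"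

lemma mode_prod_outer_sum:
  assumes "j < d"
  shows "mode_prod (outer_sum d r c z) j nj U =
     outer_sum d r c (\<lambda>l k. if l = j then mat_vec nj U (z l k) else z l k)"
proof
  fix i
  have split_j: "(\<Prod>l<d. f l) = f j * (\<Prod>l\<in>{..<d}-{j}. f l)" for f :: "nat \<Rightarrow> complex"
    using prod.remove[of "{..<d}" j] assms by simp
  have "mode_prod (outer_sum d r c z) j nj U i
      = (\<Sum>q<nj. \<Sum>k<r. c k * (z j k q * (\<Prod>l\<in>{..<d}-{j}. z l k (i l))) * U (i j) q)"
    unfolding mode_prod_def outer_sum_def outer_def sum_distrib_right
    by (intro sum.cong refl) (simp add: split_j)
  also have "\<dots> = (\<Sum>k<r. c k * (mat_vec nj U (z j k) (i j) * (\<Prod>l\<in>{..<d}-{j}. z l k (i l))))"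
    unfolding mat_vec_def sum_distrib_left sum_distrib_right
    by (subst sum.swap) (intro sum.cong refl, simp add: algebra_simps)
  also have "\<dots> = outer_sum d r c (\<lambda>l k. if l = j then mat_vec nj U (z l k) else z l k) i"
    unfolding outer_sum_def outer_def by (intro sum.cong refl) (simp add: split_j)
  finally show "mode_prod (outer_sum d r c z) j nj U i =
      outer_sum d r c (\<lambda>l k. if l = j then mat_vec nj U (z l k) else z l k) i" .
qed

lemma modes_prod_outer_sum:
  "j \<le> d \<Longrightarrow> modes_prod (outer_sum d r c z) n A j =
     outer_sum d r c (\<lambda>l k. if l < j then mat_vec (n l) (A l) (z l k) else z l k)"
proof (induction j)
  case 0
  then show ?case by simp
next
  case (Suc j)
  then show ?case
    by (simp add: mode_prod_outer_sum)
      (rule arg_cong[where f = "outer_sum d r c"], auto simp: fun_eq_iff less_Suc_eq)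
qed

lemma of_real_vnorm_sq: "complex_of_real (vnorm_sq n x) = (\<Sum>i<n. x i * cnj (x i))"
  unfolding vnorm_sq_def of_real_sum complex_norm_square by simp

lemma vinner_self: "vinner n x x = complex_of_real (vnorm_sq n x)"
  unfolding vinner_def of_real_vnorm_sq ..

lemma vnorm_sq_nonneg: "0 \<le> vnorm_sq n x"
  unfolding vnorm_sq_def by (simp add: sum_nonneg)

lemma tnorm_sq_outer_sum:
  "complex_of_real (tnorm_sq n d (outer_sum d r c z)) =
     sesq_form r c (\<lambda>k h. \<Prod>l<d. vinner (n l) (z l k) (z l h))"
proof -
  have "complex_of_real (tnorm_sq n d (outer_sum d r c z)) =
     (\<Sum>i\<in>tidx n d. \<Sum>k<r. \<Sum>h<r. c k * cnj (c h) * (\<Prod>l<d. z l k (i l) * cnj (z l h (i l))))"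
    unfolding tnorm_sq_def of_real_sum complex_norm_square
    by (intro sum.cong refl)
      (simp add: outer_sum_def outer_def cnj_sum cnj_prod sum_product prod.distrib mult_ac)
  also have "\<dots> = (\<Sum>k<r. \<Sum>h<r. c k * cnj (c h) *
                    (\<Sum>i\<in>tidx n d. \<Prod>l<d. z l k (i l) * cnj (z l h (i l))))"
    unfolding sum_distrib_left by (subst sum.swap) (simp add: sum.swap[of _ "tidx n d"])
  also have "\<dots> = sesq_form r c (\<lambda>k h. \<Prod>l<d. vinner (n l) (z l k) (z l h))"
    unfolding sesq_form_def vinner_def tidx_def by (subst prod_sum_PiE) auto
  finally show ?thesis .
qed

lemma sesq_form_diff: "sesq_form r c K - sesq_form r c K' = sesq_form r c (\<lambda>k h. K k h - K' k h)"
  unfolding sesq_form_def by (simp add: sum_subtractf right_diff_distrib)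

lemma sesq_form_identity:
  "sesq_form r c (\<lambda>k h. if k = h then 1 else 0) = complex_of_real (\<Sum>k<r. (cmod (c k))\<^sup>2)"
  unfolding sesq_form_def of_real_sum complex_norm_square
  by (intro sum.cong refl) (simp add: if_distrib cong: if_cong)

lemma norm_sesq_form_le:
  assumes "\<And>k. k < r \<Longrightarrow> cmod (K k k) \<le> a"
    and "\<And>k h. k < r \<Longrightarrow> h < r \<Longrightarrow> k \<noteq> h \<Longrightarrow> cmod (K k h) \<le> b"
    and "0 \<le> b"
  shows "cmod (sesq_form r c K) \<le> (a + b * real r) * (\<Sum>k<r. (cmod (c k))\<^sup>2)"
proof -
  let ?N = "\<Sum>k<r. (cmod (c k))\<^sup>2"
  have "cmod (sesq_form r c K) \<le> (\<Sum>k<r. \<Sum>h<r. cmod (c k) * cmod (c h) * cmod (K k h))"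
    unfolding sesq_form_def
    by (rule order.trans[OF norm_sum sum_mono[OF order.trans[OF norm_sum]]]) (simp add: norm_mult)
  also have "\<dots> \<le> (\<Sum>k<r. \<Sum>h<r. (if k = h then a * (cmod (c k))\<^sup>2 else 0) + b * (cmod (c k) * cmod (c h)))"
  proof (intro sum_mono)
    fix k h
    assume "k \<in> {..<r}" "h \<in> {..<r}"
    show "cmod (c k) * cmod (c h) * cmod (K k h)
        \<le> (if k = h then a * (cmod (c k))\<^sup>2 else 0) + b * (cmod (c k) * cmod (c h))"
    proof (cases "k = h")
      case True
      with assms(1,3) \<open>k \<in> {..<r}\<close> have "cmod (K k h) \<le> a + b"
        by (auto intro: add_increasing2)
      then have "cmod (c k) * cmod (c h) * cmod (K k h) \<le> cmod (c k) * cmod (c h) * (a + b)"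
        by (intro mult_left_mono) auto
      with True show ?thesis by (simp add: power2_eq_square algebra_simps)
    next
      case False
      with assms(2) \<open>k \<in> {..<r}\<close> \<open>h \<in> {..<r}\<close> have "cmod (K k h) \<le> b" by auto
      then have "cmod (c k) * cmod (c h) * cmod (K k h) \<le> cmod (c k) * cmod (c h) * b"
        by (intro mult_left_mono) auto
      with False show ?thesis by (simp add: algebra_simps)
    qed
  qed
  also have "\<dots> = a * ?N + b * (\<Sum>k<r. cmod (c k))\<^sup>2"
    by (simp add: sum.distrib sum_distrib_left sum_distrib_right power2_eq_square mult_ac)
  also have "\<dots> \<le> a * ?N + b * (?N * real r)"
    using sum_squared_le_sum_of_squares[of "\<lambda>k. cmod (c k)" "{..<r}"] assms(3)
    by (intro add_left_mono mult_left_mono) auto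
  finally show ?thesis by (simp add: algebra_simps)
qed

section \<open>Perturbation of products\<close>

lemma norm_prod_diff_le:
  fixes a b :: "nat \<Rightarrow> 'a::real_normed_field"
  assumes "\<And>l. l < d \<Longrightarrow> norm (b l) \<le> \<beta>" "\<And>l. l < d \<Longrightarrow> norm (a l - b l) \<le> \<delta>"
    and "0 \<le> \<beta>" "0 \<le> \<delta>"
  shows "norm ((\<Prod>l<d. a l) - (\<Prod>l<d. b l)) \<le> (\<beta> + \<delta>) ^ d - \<beta> ^ d"
  using assms(1,2)
proof (induction d)
  case 0
  then show ?case by simp
next
  case (Suc d)
  have IH: "norm ((\<Prod>l<d. a l) - (\<Prod>l<d. b l)) \<le> (\<beta> + \<delta>) ^ d - \<beta> ^ d"
    using Suc by auto
  have a_d: "norm (a d) \<le> \<beta> + \<delta>"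
    using Suc.prems[of d] norm_triangle_ineq[of "a d - b d" "b d"] by simp
  have "norm (\<Prod>l<d. b l) = (\<Prod>l<d. norm (b l))"
    by (simp add: prod_norm)
  also have "\<dots> \<le> (\<Prod>l<d. \<beta>)"
    using Suc.prems(1) by (intro prod_mono) auto
  finally have prod_b: "norm (\<Prod>l<d. b l) \<le> \<beta> ^ d" by simp
  have "(\<Prod>l<Suc d. a l) - (\<Prod>l<Suc d. b l) =
      a d * ((\<Prod>l<d. a l) - (\<Prod>l<d. b l)) + (a d - b d) * (\<Prod>l<d. b l)"
    by (simp add: algebra_simps)
  then have "norm ((\<Prod>l<Suc d. a l) - (\<Prod>l<Suc d. b l)) \<le>
      norm (a d) * norm ((\<Prod>l<d. a l) - (\<Prod>l<d. b l)) + norm (a d - b d) * norm (\<Prod>l<d. b l)"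
    by (metis norm_mult norm_triangle_ineq)
  also have "\<dots> \<le> (\<beta> + \<delta>) * ((\<beta> + \<delta>) ^ d - \<beta> ^ d) + \<delta> * \<beta> ^ d"
    using a_d IH prod_b Suc.prems(2)[of d] assms(3,4) by (intro add_mono mult_mono) auto
  also have "\<dots> = (\<beta> + \<delta>) ^ Suc d - \<beta> ^ Suc d"
    by (simp add: algebra_simps)
  finally show ?case .
qed

lemma power_Suc_diff_le:
  fixes x y :: real
  assumes "0 \<le> y" "y \<le> x"
  shows "x ^ Suc k - y ^ Suc k \<le> real (Suc k) * (x - y) * x ^ k"
proof (induction k)
  case 0
  then show ?case by simp
next
  case (Suc k)
  have "x ^ Suc (Suc k) - y ^ Suc (Suc k) = x * (x ^ Suc k - y ^ Suc k) + (x - y) * y ^ Suc k"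
    by (simp add: algebra_simps)
  also have "\<dots> \<le> x * (real (Suc k) * (x - y) * x ^ k) + (x - y) * x ^ Suc k"
    using Suc assms by (intro add_mono mult_left_mono power_mono) auto
  also have "\<dots> = real (Suc (Suc k)) * (x - y) * x ^ Suc k"
    by (simp add: algebra_simps)
  finally show ?case .
qed

lemma power_add_le_three_power:
  fixes a b :: real
  assumes "0 \<le> b" "real k * b \<le> a"
  shows "(a + b) ^ k \<le> 3 * a ^ k"
proof (cases "0 < a")
  case False
  have "0 \<le> real k * b" using assms(1) by simp
  with False assms(2) have "a = 0" "real k * b = 0" by linarith+
  then have "a = 0" "k = 0 \<or> b = 0" by auto
  then show ?thesis by auto
next
  case True
  have "(a + b) ^ k = a ^ k * (1 + b / a) ^ k"
    using True by (simp add: field_simps flip: power_mult_distrib)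
  also have "(1 + b / a) ^ k \<le> exp (b / a) ^ k"
    using assms(1) True exp_ge_add_one_self[of "b / a"] by (intro power_mono) auto
  also have "\<dots> = exp (real k * (b / a))"
    by (rule exp_of_nat_mult[symmetric])
  also have "\<dots> \<le> exp 1"
    using assms True by (simp add: field_simps)
  also have "\<dots> \<le> 3"
    by (rule exp_le)
  finally show ?thesis
    using True by (simp add: mult.commute mult_left_mono)
qed

lemma power_add_diff_le:
  fixes \<mu> \<delta> :: real
  assumes "0 \<le> \<mu>" "0 \<le> \<delta>" "real k * \<delta> \<le> \<mu>"
  shows "(\<mu> + \<delta>) ^ Suc k - \<mu> ^ Suc k \<le> 3 * real (Suc k) * \<delta> * \<mu> ^ k"
proof -
  have "(\<mu> + \<delta>) ^ Suc k - \<mu> ^ Suc k \<le> real (Suc k) * \<delta> * (\<mu> + \<delta>) ^ k"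
    using power_Suc_diff_le[of \<mu> "\<mu> + \<delta>" k] assms by simp
  also have "\<dots> \<le> real (Suc k) * \<delta> * (3 * \<mu> ^ k)"
    using power_add_le_three_power[of \<delta> k \<mu>] assms by (intro mult_left_mono) auto
  finally show ?thesis by (simp add: algebra_simps)
qed

lemma diagonal_error_le:
  fixes \<delta> :: real
  assumes "0 \<le> \<delta>" "real d * \<delta> \<le> 1"
  shows "(1 + \<delta>) ^ d - 1 \<le> 3 * real d * \<delta>"
proof (cases d)
  case 0
  then show ?thesis by simp
next
  case (Suc k)
  have "real k * \<delta> \<le> real d * \<delta>"
    using assms Suc by (intro mult_right_mono) auto
  with assms have "real k * \<delta> \<le> 1" by linarith
  with power_add_diff_le[of 1 \<delta> k] assms Suc show ?thesis by simp
qed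

lemma off_diagonal_error_le:
  fixes \<mu> \<rho> \<delta> t :: real
  assumes d: "2 \<le> d" and \<mu>: "0 \<le> \<mu>" "\<mu> ^ (d - 1) * real r \<le> 1/2"
    and \<rho>: "1 \<le> \<rho>" "\<rho> ^ d = real r" and "0 \<le> \<delta>" and t: "real d * \<delta> * \<rho> \<le> t" "t \<le> 1"
  shows "((\<mu> + \<delta>) ^ d - \<mu> ^ d) * real r \<le> 3 / 2 * t"
proof -
  obtain k where k: "d = Suc k"
    using d by (cases d) auto
  have "real d * \<delta> * 1 \<le> real d * \<delta> * \<rho>"
    using \<open>0 \<le> \<delta>\<close> \<rho> by (intro mult_left_mono) auto
  with t have d\<delta>: "real d * \<delta> \<le> t"
    by simp
  moreover have "0 \<le> real d * \<delta>"
    using \<open>0 \<le> \<delta>\<close> by simp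
  ultimately have "0 \<le> t"
    by linarith
  show ?thesis
  proof (cases "real k * \<delta> \<le> \<mu>")
    case True
    have "((\<mu> + \<delta>) ^ d - \<mu> ^ d) * real r \<le> 3 * real d * \<delta> * \<mu> ^ k * real r"
      using power_add_diff_le[OF \<mu>(1) \<open>0 \<le> \<delta>\<close> True] k by (intro mult_right_mono) auto
    also have "\<dots> = 3 * (real d * \<delta>) * (\<mu> ^ k * real r)"
      by (simp add: mult_ac)
    also have "\<dots> \<le> 3 * t * (1 / 2)"
      using d\<delta> \<mu> \<open>0 \<le> \<delta>\<close> \<open>0 \<le> t\<close> k by (intro mult_mono mult_left_mono) auto
    finally show ?thesis
      by simp
  next
    case False
    then have "\<mu> + \<delta> \<le> real d * \<delta>"
      using k by (simp add: algebra_simps)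
    then have "(\<mu> + \<delta>) ^ d \<le> (real d * \<delta>) ^ d"
      using \<mu>(1) \<open>0 \<le> \<delta>\<close> by (intro power_mono) auto
    moreover have "0 \<le> \<mu> ^ d"
      using \<mu>(1) by simp
    ultimately have "((\<mu> + \<delta>) ^ d - \<mu> ^ d) * real r \<le> (real d * \<delta> * \<rho>) ^ d"
      using \<rho>(1) unfolding \<rho>(2)[symmetric] power_mult_distrib by (intro mult_right_mono) auto
    also have "\<dots> \<le> t ^ d"
      using t \<open>0 \<le> \<delta>\<close> \<rho> by (intro power_mono) auto
    also have "\<dots> \<le> t"
      using t \<open>0 \<le> t\<close> d power_decreasing[of 1 d t] by simp
    finally show ?thesis
      using \<open>0 \<le> t\<close> by simp
  qed
qed

lemma gram_error_budget:
  fixes \<epsilon> \<mu> \<rho> \<delta> :: real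
  assumes d: "2 \<le> d" and \<epsilon>: "0 < \<epsilon>" "\<epsilon> \<le> 1" and \<mu>: "0 \<le> \<mu>" "\<mu> ^ (d - 1) * real r \<le> 1/2"
    and \<rho>: "1 \<le> \<rho>" "\<rho> ^ d = real r" and "0 \<le> \<delta>" and d\<delta>\<rho>: "real d * \<delta> * \<rho> = \<epsilon> / 9"
  shows "((1 + \<delta>) ^ d - 1) + ((\<mu> + \<delta>) ^ d - \<mu> ^ d) * real r \<le> \<epsilon> / 2"
proof -
  have "real d * \<delta> * 1 \<le> real d * \<delta> * \<rho>"
    using \<open>0 \<le> \<delta>\<close> \<rho> by (intro mult_left_mono) auto
  with d\<delta>\<rho> have "real d * \<delta> \<le> \<epsilon> / 9"
    by simp
  then have "(1 + \<delta>) ^ d - 1 \<le> 3 * real d * \<delta>"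
    using \<epsilon> \<open>0 \<le> \<delta>\<close> by (intro diagonal_error_le) auto
  moreover have "((\<mu> + \<delta>) ^ d - \<mu> ^ d) * real r \<le> 3 / 2 * (\<epsilon> / 9)"
    using \<epsilon> d\<delta>\<rho> by (intro off_diagonal_error_le[OF d \<mu> \<rho> \<open>0 \<le> \<delta>\<close>]) auto
  ultimately show ?thesis
    using \<open>real d * \<delta> \<le> \<epsilon> / 9\<close> by linarith
qed

section \<open>Incoherent rank-one bases\<close>

lemma norm_sesq_form_prod_diff_le:
  fixes G G' :: "nat \<Rightarrow> nat \<Rightarrow> nat \<Rightarrow> complex"
  assumes diag: "\<And>l k. l < d \<Longrightarrow> k < r \<Longrightarrow> cmod (G l k k) \<le> 1"
    and off: "\<And>l k h. l < d \<Longrightarrow> k < r \<Longrightarrow> h < r \<Longrightarrow> k \<noteq> h \<Longrightarrow> cmod (G l k h) \<le> \<mu>"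
    and close: "\<And>l k h. l < d \<Longrightarrow> k < r \<Longrightarrow> h < r \<Longrightarrow> cmod (G' l k h - G l k h) \<le> \<delta>"
    and "0 \<le> \<mu>" "0 \<le> \<delta>"
  shows "cmod (sesq_form r c (\<lambda>k h. \<Prod>l<d. G' l k h) - sesq_form r c (\<lambda>k h. \<Prod>l<d. G l k h))
      \<le> (((1 + \<delta>) ^ d - 1) + ((\<mu> + \<delta>) ^ d - \<mu> ^ d) * real r) * (\<Sum>k<r. (cmod (c k))\<^sup>2)"
  unfolding sesq_form_diff
proof (rule norm_sesq_form_le)
  fix k
  assume "k < r"
  with diag close \<open>0 \<le> \<delta>\<close> have "cmod ((\<Prod>l<d. G' l k k) - (\<Prod>l<d. G l k k)) \<le> (1 + \<delta>) ^ d - 1 ^ d"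
    by (intro norm_prod_diff_le) auto
  then show "cmod ((\<Prod>l<d. G' l k k) - (\<Prod>l<d. G l k k)) \<le> (1 + \<delta>) ^ d - 1"
    by simp
next
  fix k h
  assume "k < r" "h < r" "k \<noteq> h"
  with off close assms(4,5) show "cmod ((\<Prod>l<d. G' l k h) - (\<Prod>l<d. G l k h)) \<le> (\<mu> + \<delta>) ^ d - \<mu> ^ d"
    by (intro norm_prod_diff_le) auto
next
  show "0 \<le> (\<mu> + \<delta>) ^ d - \<mu> ^ d"
    using assms(4,5) by (simp add: power_mono)
qed

lemma norm_sesq_form_prod_sub_le:
  fixes G :: "nat \<Rightarrow> nat \<Rightarrow> nat \<Rightarrow> complex"
  assumes diag: "\<And>l k. l < d \<Longrightarrow> k < r \<Longrightarrow> G l k k = 1"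
    and off: "\<And>l k h. l < d \<Longrightarrow> k < r \<Longrightarrow> h < r \<Longrightarrow> k \<noteq> h \<Longrightarrow> cmod (G l k h) \<le> \<mu>"
    and "0 \<le> \<mu>"
  shows "cmod (sesq_form r c (\<lambda>k h. \<Prod>l<d. G l k h) - complex_of_real (\<Sum>k<r. (cmod (c k))\<^sup>2))
      \<le> \<mu> ^ d * real r * (\<Sum>k<r. (cmod (c k))\<^sup>2)"
proof -
  have "cmod (sesq_form r c (\<lambda>k h. \<Prod>l<d. G l k h) - sesq_form r c (\<lambda>k h. if k = h then 1 else 0))
      \<le> (0 + \<mu> ^ d * real r) * (\<Sum>k<r. (cmod (c k))\<^sup>2)"
    unfolding sesq_form_diff
  proof (rule norm_sesq_form_le)
    fix k
    assume "k < r"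
    with diag show "cmod ((\<Prod>l<d. G l k k) - (if k = k then 1 else 0)) \<le> 0"
      by simp
  next
    fix k h
    assume "k < r" "h < r" "k \<noteq> h"
    have "cmod (\<Prod>l<d. G l k h) \<le> (\<Prod>l<d. cmod (G l k h))"
      by (rule norm_prod_le)
    also have "\<dots> \<le> (\<Prod>l<d. \<mu>)"
      using off \<open>k < r\<close> \<open>h < r\<close> \<open>k \<noteq> h\<close> by (intro prod_mono) auto
    finally show "cmod ((\<Prod>l<d. G l k h) - (if k = h then 1 else 0)) \<le> \<mu> ^ d"
      using \<open>k \<noteq> h\<close> by simp
  next
    show "0 \<le> \<mu> ^ d"
      using assms(3) by simp
  qed
  then show ?thesis
    unfolding sesq_form_identity by simp
qed

lemma finite_coherence_values:
  fixes d r :: nat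
  shows "finite {cmod (vinner (n l) (y l k) (y l h)) | l k h. l < d \<and> k < r \<and> h < r \<and> k \<noteq> h}"
proof (rule finite_subset)
  show "{cmod (vinner (n l) (y l k) (y l h)) | l k h. l < d \<and> k < r \<and> h < r \<and> k \<noteq> h}
      \<subseteq> (\<lambda>(l, k, h). cmod (vinner (n l) (y l k) (y l h))) ` ({..<d} \<times> {..<r} \<times> {..<r})"
    by force
qed (rule finite_imageI, simp)

lemma coherence_nonneg: "0 \<le> coherence n d r y"
  unfolding coherence_def using finite_coherence_values by (intro Max_ge) auto

lemma vinner_le_coherence:
  assumes "l < d" "k < r" "h < r" "k \<noteq> h"
  shows "cmod (vinner (n l) (y l k) (y l h)) \<le> coherence n d r y"
  unfolding coherence_def using finite_coherence_values assms by (intro Max_ge) blast+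

lemma coherence_bound_imp_pos:
  assumes "coherence n d r y ^ (d - 1) < 1 / (2 * real r)"
  shows "0 < r"
proof (rule ccontr)
  assume "\<not> 0 < r"
  then have "1 / (2 * real r) = 0"
    by simp
  moreover have "0 \<le> coherence n d r y ^ (d - 1)"
    using coherence_nonneg by simp
  ultimately show False
    using assms by linarith
qed

lemma coherence_power_mult_le_half:
  assumes "coherence n d r y ^ (d - 1) < 1 / (2 * real r)"
  shows "coherence n d r y ^ (d - 1) * real r \<le> 1/2"
  using assms coherence_bound_imp_pos[OF assms] by (simp add: field_simps)

lemma sum_sq_le_two_tnorm_sq_outer_sum:
  assumes unit: "\<And>l k. l < d \<Longrightarrow> k < r \<Longrightarrow> vnorm_sq (n l) (y l k) = 1"
    and coh: "coherence n d r y ^ (d - 1) < 1 / (2 * real r)"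
  shows "(\<Sum>k<r. (cmod (c k))\<^sup>2) \<le> 2 * tnorm_sq n d (outer_sum d r c y)"
proof -
  define \<mu> where "\<mu> = coherence n d r y"
  define N where "N = (\<Sum>k<r. (cmod (c k))\<^sup>2)"
  define T where "T = tnorm_sq n d (outer_sum d r c y)"
  have "0 < r"
    using coh by (rule coherence_bound_imp_pos)
  have "0 \<le> \<mu>"
    unfolding \<mu>_def by (rule coherence_nonneg)
  have "0 \<le> N"
    unfolding N_def by (simp add: sum_nonneg)
  have small: "\<mu> ^ (d - 1) * real r \<le> 1/2"
    unfolding \<mu>_def using coh by (rule coherence_power_mult_le_half)
  have "\<mu> \<le> 1"
  proof (rule ccontr)
    assume "\<not> \<mu> \<le> 1"
    then have "1 * 1 \<le> \<mu> ^ (d - 1) * real r"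
      using \<open>0 < r\<close> by (intro mult_mono one_le_power) auto
    with small show False
      by simp
  qed
  have "cmod (complex_of_real T - complex_of_real N) \<le> \<mu> ^ d * real r * N"
    unfolding T_def N_def tnorm_sq_outer_sum using unit \<open>0 \<le> \<mu>\<close>
    by (intro norm_sesq_form_prod_sub_le) (auto simp: \<mu>_def vinner_self intro: vinner_le_coherence)
  then have "\<bar>T - N\<bar> \<le> \<mu> ^ d * real r * N"
    by (simp flip: of_real_diff)
  moreover have "\<mu> ^ d * real r \<le> \<mu> ^ (d - 1) * real r"
    using \<open>0 \<le> \<mu>\<close> \<open>\<mu> \<le> 1\<close> by (intro mult_right_mono power_decreasing) auto
  then have "\<mu> ^ d * real r * N \<le> 1/2 * N"
    using small \<open>0 \<le> N\<close> by (intro mult_right_mono) auto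
  ultimately show ?thesis
    unfolding T_def N_def by (simp add: abs_le_iff)
qed

lemma tnorm_sq_modes_prod_outer_sum_close:
  assumes d: "2 \<le> d" and \<epsilon>: "0 < \<epsilon>" "\<epsilon> \<le> 1"
    and unit: "\<And>l k. l < d \<Longrightarrow> k < r \<Longrightarrow> vnorm_sq (n l) (y l k) = 1"
    and coh: "coherence n d r y ^ (d - 1) < 1 / (2 * real r)"
    and gram: "\<And>l k h. l < d \<Longrightarrow> k < r \<Longrightarrow> h < r \<Longrightarrow>
      cmod (vinner (m l) (mat_vec (n l) (A l) (y l k)) (mat_vec (n l) (A l) (y l h))
            - vinner (n l) (y l k) (y l h)) \<le> \<epsilon> / (9 * real d * real r powr (1 / real d))"
  shows "\<bar>tnorm_sq m d (modes_prod (outer_sum d r c y) n A d) - tnorm_sq n d (outer_sum d r c y)\<bar>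
           \<le> \<epsilon> * tnorm_sq n d (outer_sum d r c y)"
proof -
  define \<mu> where "\<mu> = coherence n d r y"
  define \<rho> where "\<rho> = real r powr (1 / real d)"
  define \<delta> where "\<delta> = \<epsilon> / (9 * real d * \<rho>)"
  define G where "G l k h = vinner (n l) (y l k) (y l h)" for l k h
  define G' where "G' l k h = vinner (m l) (mat_vec (n l) (A l) (y l k)) (mat_vec (n l) (A l) (y l h))"
    for l k h
  define N where "N = (\<Sum>k<r. (cmod (c k))\<^sup>2)"
  define T where "T = tnorm_sq n d (outer_sum d r c y)"
  define T' where "T' = tnorm_sq m d (modes_prod (outer_sum d r c y) n A d)"
  have "0 < r"
    using coh by (rule coherence_bound_imp_pos)
  have \<rho>: "1 \<le> \<rho>" "\<rho> ^ d = real r"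
    unfolding \<rho>_def using \<open>0 < r\<close> d by (auto simp: ge_one_powr_ge_zero powr_power)
  have "0 \<le> \<delta>"
    unfolding \<delta>_def using \<epsilon> \<rho> by simp
  have off: "cmod (G l k h) \<le> \<mu>" if "l < d" "k < r" "h < r" "k \<noteq> h" for l k h
    unfolding G_def \<mu>_def using that by (rule vinner_le_coherence)
  have close: "cmod (G' l k h - G l k h) \<le> \<delta>" if "l < d" "k < r" "h < r" for l k h
    unfolding G_def G'_def \<delta>_def \<rho>_def using gram[OF that] .
  have T: "complex_of_real T = sesq_form r c (\<lambda>k h. \<Prod>l<d. G l k h)"
    unfolding T_def G_def by (rule tnorm_sq_outer_sum)
  have T': "complex_of_real T' = sesq_form r c (\<lambda>k h. \<Prod>l<d. G' l k h)"
    unfolding T'_def G'_def modes_prod_outer_sum[OF order.refl] tnorm_sq_outer_sum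
    by (intro arg_cong[where f = "sesq_form r c"] ext prod.cong) auto
  have "\<bar>T' - T\<bar> = cmod (complex_of_real T' - complex_of_real T)"
    by (simp flip: of_real_diff)
  also have "\<dots> \<le> (((1 + \<delta>) ^ d - 1) + ((\<mu> + \<delta>) ^ d - \<mu> ^ d) * real r) * N"
    unfolding T T' N_def using unit coherence_nonneg[of n d r y]
    by (intro norm_sesq_form_prod_diff_le[OF _ off close]) (auto simp: G_def \<mu>_def vinner_self \<open>0 \<le> \<delta>\<close>)
  also have "\<dots> \<le> \<epsilon> / 2 * N"
  proof (intro mult_right_mono)
    show "((1 + \<delta>) ^ d - 1) + ((\<mu> + \<delta>) ^ d - \<mu> ^ d) * real r \<le> \<epsilon> / 2"
      unfolding \<mu>_def using d \<epsilon> \<rho> \<open>0 \<le> \<delta>\<close> coherence_nonneg coherence_power_mult_le_half[OF coh]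
      by (intro gram_error_budget) (auto simp: \<delta>_def)
    show "0 \<le> N"
      unfolding N_def by (simp add: sum_nonneg)
  qed
  also have "\<dots> \<le> \<epsilon> * T"
    using sum_sq_le_two_tnorm_sq_outer_sum[OF unit coh, of c] \<epsilon>
    unfolding N_def T_def by simp
  finally show ?thesis
    unfolding T_def T'_def .
qed

section \<open>Inner products under JL embeddings\<close>

lemma vinner_polarization:
  "vinner n u v = (1/4) * (\<Sum>p<4. \<i> ^ p * complex_of_real (vnorm_sq n (\<lambda>i. u i + \<i> ^ p * v i)))"
proof -
  have pointwise: "a * cnj b = (1/4) * (\<Sum>p<4. \<i> ^ p * ((a + \<i> ^ p * b) * cnj (a + \<i> ^ p * b)))"
    for a b :: complex
  proof -
    have "a * cnj b = (1/4) * ((a + b) * cnj (a + b) + \<i> * ((a + \<i> * b) * cnj (a + \<i> * b))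
        + \<i>\<^sup>2 * ((a + \<i>\<^sup>2 * b) * cnj (a + \<i>\<^sup>2 * b)) + \<i> ^ 3 * ((a + \<i> ^ 3 * b) * cnj (a + \<i> ^ 3 * b)))"
      by (simp add: algebra_simps power2_eq_square power3_eq_cube)
    then show ?thesis by (simp add: numeral_eq_Suc)
  qed
  have "vinner n u v = (\<Sum>i<n. (1/4) * (\<Sum>p<4. \<i> ^ p * ((u i + \<i> ^ p * v i) * cnj (u i + \<i> ^ p * v i))))"
    unfolding vinner_def by (intro sum.cong refl) (rule pointwise)
  also have "\<dots> = (1/4) * (\<Sum>p<4. \<i> ^ p * (\<Sum>i<n. (u i + \<i> ^ p * v i) * cnj (u i + \<i> ^ p * v i)))"
    unfolding sum_distrib_left by (rule sum.swap)
  finally show ?thesis by (simp only: of_real_vnorm_sq)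
qed

lemma mat_vec_add_scaled:
  "mat_vec n A (\<lambda>i. x i + t * w i) = (\<lambda>i. mat_vec n A x i + t * mat_vec n A w i)"
  unfolding mat_vec_def by (auto simp: algebra_simps sum.distrib sum_distrib_left)

lemma vnorm_sq_add_scaled_le:
  assumes "cmod t = 1"
  shows "vnorm_sq n (\<lambda>i. x i + t * w i) \<le> 2 * vnorm_sq n x + 2 * vnorm_sq n w"
proof -
  have pointwise: "(cmod (a + t * b))\<^sup>2 \<le> 2 * (cmod a)\<^sup>2 + 2 * (cmod b)\<^sup>2" for a b
  proof -
    have "cmod (a + t * b) \<le> cmod a + cmod b"
      using norm_triangle_ineq[of a "t * b"] assms by (simp add: norm_mult)
    then have "(cmod (a + t * b))\<^sup>2 \<le> (cmod a + cmod b)\<^sup>2"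
      by (intro power_mono) auto
    also have "\<dots> \<le> 2 * (cmod a)\<^sup>2 + 2 * (cmod b)\<^sup>2"
      using zero_le_power2[of "cmod a - cmod b"] by (simp add: power2_eq_square algebra_simps)
    finally show ?thesis .
  qed
  have "vnorm_sq n (\<lambda>i. x i + t * w i) \<le> (\<Sum>i<n. 2 * (cmod (x i))\<^sup>2 + 2 * (cmod (w i))\<^sup>2)"
    unfolding vnorm_sq_def by (intro sum_mono pointwise)
  also have "\<dots> = 2 * vnorm_sq n x + 2 * vnorm_sq n w"
    unfolding vnorm_sq_def by (simp add: sum.distrib sum_distrib_left)
  finally show ?thesis .
qed

lemma JL_embedding_vinner_error:
  assumes JL: "is_JL_embedding e m n A S"
    and polar: "\<And>p. p < 4 \<Longrightarrow> (\<lambda>i. x i + \<i> ^ p * w i) \<in> S"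
    and "vnorm_sq n x = 1" "vnorm_sq n w = 1"
  shows "cmod (vinner m (mat_vec n A x) (mat_vec n A w) - vinner n x w) \<le> 4 * e"
proof -
  let ?V = "\<lambda>p. vnorm_sq n (\<lambda>i. x i + \<i> ^ p * w i)"
  let ?V' = "\<lambda>p. vnorm_sq m (\<lambda>i. mat_vec n A x i + \<i> ^ p * mat_vec n A w i)"
  have each: "\<bar>?V' p - ?V p\<bar> \<le> 4 * e" if p: "p < 4" for p
  proof -
    obtain e' where e': "-e < e'" "e' < e"
        "vnorm_sq m (mat_vec n A (\<lambda>i. x i + \<i> ^ p * w i)) = (1 + e') * ?V p"
      using JL polar[OF p] unfolding is_JL_embedding_def by blast
    then have V': "?V' p = (1 + e') * ?V p"
      by (simp only: mat_vec_add_scaled)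
    have "?V p \<le> 4"
      using vnorm_sq_add_scaled_le[of "\<i> ^ p" n x w] assms(3,4) by (simp add: norm_power)
    then have "\<bar>e'\<bar> * ?V p \<le> e * 4"
      using e' vnorm_sq_nonneg by (intro mult_mono) auto
    then show ?thesis
      using V' vnorm_sq_nonneg by (simp add: algebra_simps abs_mult)
  qed
  have "vinner m (mat_vec n A x) (mat_vec n A w) - vinner n x w
      = (1/4) * (\<Sum>p<4. \<i> ^ p * complex_of_real (?V' p - ?V p))"
    unfolding vinner_polarization of_real_diff right_diff_distrib sum_subtractf ..
  then have "cmod (vinner m (mat_vec n A x) (mat_vec n A w) - vinner n x w)
      = (1/4) * cmod (\<Sum>p<4. \<i> ^ p * complex_of_real (?V' p - ?V p))"
    by (simp only: norm_mult) simp
  also have "\<dots> \<le> (1/4) * (\<Sum>p<4. cmod (\<i> ^ p * complex_of_real (?V' p - ?V p)))"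
    by (intro mult_left_mono norm_sum) auto
  also have "\<dots> = (1/4) * (\<Sum>p<4. \<bar>?V' p - ?V p\<bar>)"
    by (simp only: norm_mult norm_power norm_ii power_one mult_1 norm_of_real)
  also have "\<dots> \<le> (1/4) * (\<Sum>p<(4::nat). 4 * e)"
    by (intro mult_left_mono sum_mono each) auto
  finally show ?thesis by simp
qed

definition polarization_set :: "nat \<Rightarrow> (nat \<Rightarrow> cvec) \<Rightarrow> cvec set" where
  "polarization_set r z = (\<lambda>(k, h, p) i. z k i + \<i> ^ p * z h i) ` ({..<r} \<times> {..<r} \<times> {..<4})"

lemma card_polarization_set: "real (card (polarization_set r z)) \<le> 4 * (real r)\<^sup>2"
proof -
  have "card (polarization_set r z) \<le> card ({..<r} \<times> {..<r} \<times> {..<4::nat})"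
    unfolding polarization_set_def by (rule card_image_le) simp
  then show ?thesis
    by (simp add: card_cartesian_product power2_eq_square flip: of_nat_mult)
qed

lemma JL_embedding_polarization_gram:
  assumes "is_JL_embedding e m n A (polarization_set r z)"
    and "k < r" "h < r" "vnorm_sq n (z k) = 1" "vnorm_sq n (z h) = 1"
  shows "cmod (vinner m (mat_vec n A (z k)) (mat_vec n A (z h)) - vinner n (z k) (z h)) \<le> 4 * e"
proof (rule JL_embedding_vinner_error[OF assms(1)])
  fix p :: nat
  assume "p < 4"
  then show "(\<lambda>i. z k i + \<i> ^ p * z h i) \<in> polarization_set r z"
    unfolding polarization_set_def using assms by (intro image_eqI[where x = "(k, h, p)"]) auto
qed (use assms in auto)

lemma JL_modes_imp_tnorm_sq_close:
  assumes d: "2 \<le> d" and \<epsilon>: "0 < \<epsilon>" "\<epsilon> \<le> 1"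
    and unit: "\<And>l k. l < d \<Longrightarrow> k < r \<Longrightarrow> vnorm_sq (n l) (y l k) = 1"
    and coh: "coherence n d r y ^ (d - 1) < 1 / (2 * real r)"
    and JL: "\<And>l. l < d \<Longrightarrow> is_JL_embedding (\<epsilon> / (36 * real d * real r powr (1 / real d)))
               (m l) (n l) (A l) (polarization_set r (y l))"
  shows "\<bar>tnorm_sq m d (modes_prod (outer_sum d r c y) n A d) - tnorm_sq n d (outer_sum d r c y)\<bar>
           \<le> \<epsilon> * tnorm_sq n d (outer_sum d r c y)"
proof (rule tnorm_sq_modes_prod_outer_sum_close[OF d \<epsilon> unit coh])
  fix l k h
  assume "l < d" "k < r" "h < r"
  then have "cmod (vinner (m l) (mat_vec (n l) (A l) (y l k)) (mat_vec (n l) (A l) (y l h))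
            - vinner (n l) (y l k) (y l h)) \<le> 4 * (\<epsilon> / (36 * real d * real r powr (1 / real d)))"
    using unit by (intro JL_embedding_polarization_gram[OF JL]) auto
  then show "cmod (vinner (m l) (mat_vec (n l) (A l) (y l k)) (mat_vec (n l) (A l) (y l h))
            - vinner (n l) (y l k) (y l h)) \<le> \<epsilon> / (9 * real d * real r powr (1 / real d))"
    by simp
qed

section \<open>Independent modewise embeddings\<close>

lemma holds_with_prob_ge_mono:
  assumes "holds_with_prob_ge M P p" "\<And>x. x \<in> space M \<Longrightarrow> P x \<Longrightarrow> Q x" "q \<le> p"
  shows "holds_with_prob_ge M Q q"
proof -
  from assms(1) obtain E where "E \<in> sets M" "E \<subseteq> {x \<in> space M. P x}" "p \<le> measure M E"
    unfolding holds_with_prob_ge_def by blast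
  with assms(2,3) show ?thesis
    unfolding holds_with_prob_ge_def by (intro bexI[of _ E]) auto
qed

lemma holds_with_prob_ge_PiM:
  fixes M :: "'i \<Rightarrow> 'a measure"
  assumes prob: "\<And>j. prob_space (M j)" and "finite I"
    and events: "\<And>j. j \<in> I \<Longrightarrow> holds_with_prob_ge (M j) (P j) (p j)"
    and nonneg: "\<And>j. j \<in> I \<Longrightarrow> 0 \<le> p j"
  shows "holds_with_prob_ge (PiM I M) (\<lambda>A. \<forall>j\<in>I. P j (A j)) (\<Prod>j\<in>I. p j)"
proof -
  have "product_prob_space M"
    by (rule product_prob_spaceI) (rule prob)
  then interpret finite_product_prob_space M I
    using \<open>finite I\<close>
    by (simp add: finite_product_prob_space_def finite_product_sigma_finite_def
        finite_product_sigma_finite_axioms_def product_prob_space_def)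
  have "\<forall>j\<in>I. \<exists>E. E \<in> sets (M j) \<and> E \<subseteq> {x \<in> space (M j). P j x} \<and> p j \<le> measure (M j) E"
    using events unfolding holds_with_prob_ge_def by blast
  from bchoice[OF this] obtain E where E: "\<forall>j\<in>I. E j \<in> sets (M j) \<and>
      E j \<subseteq> {x \<in> space (M j). P j x} \<and> p j \<le> measure (M j) (E j)"
    by blast
  show ?thesis
    unfolding holds_with_prob_ge_def
  proof (intro bexI[of _ "PiE I E"] conjI)
    show "PiE I E \<in> sets (PiM I M)"
      using E \<open>finite I\<close> by (intro sets_PiM_I_finite) auto
    show "PiE I E \<subseteq> {A \<in> space (PiM I M). \<forall>j\<in>I. P j (A j)}"
      using E by (force simp: space_PiM PiE_iff)
    have "(\<Prod>j\<in>I. p j) \<le> (\<Prod>j\<in>I. measure (M j) (E j))"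
      using E nonneg by (intro prod_mono) auto
    also have "\<dots> = measure (PiM I M) (PiE I E)"
      using E by (intro prob_times[symmetric]) auto
    finally show "(\<Prod>j\<in>I. p j) \<le> measure (PiM I M) (PiE I E)" .
  qed
qed

lemma eta_optimal_with_JL_polarization:
  assumes opt: "eta_optimal_with C \<eta> D" and e: "0 < e" "e < 1" and "m < n" "0 < r"
    and card: "4 * (real r)\<^sup>2 \<le> \<eta> * exp (e\<^sup>2 * real m / C)"
  shows "holds_with_prob_ge (D m n) (\<lambda>A. is_JL_embedding e m n A (polarization_set r z)) (1 - \<eta>)"
proof -
  have "(0, 0, 0) \<in> {..<r} \<times> {..<r} \<times> {..<4::nat}"
    using \<open>0 < r\<close> by simp
  then have "polarization_set r z \<noteq> {}"
    unfolding polarization_set_def by blast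
  moreover have "finite (polarization_set r z)"
    unfolding polarization_set_def by simp
  moreover have "real (card (polarization_set r z)) \<le> \<eta> * exp (e\<^sup>2 * real m / C)"
    using card_polarization_set card by (rule order.trans)
  ultimately show ?thesis
    using opt e \<open>m < n\<close> unfolding eta_optimal_with_def by blast
qed

lemma sample_size_imp_card_bound:
  fixes C \<epsilon> \<eta> :: real and d r m :: nat
  assumes "0 < C" "0 < \<epsilon>" "0 < \<eta>" "\<eta> \<le> 1" "0 < d" "0 < r"
    and m: "2592 * C * real r powr (2 / real d) * (real d)\<^sup>2 / \<epsilon>\<^sup>2
              * ln (2 * (real r)\<^sup>2 * real d / \<eta>) \<le> real m"
  shows "4 * (real r)\<^sup>2
      \<le> \<eta> / real d * exp ((\<epsilon> / (36 * real d * real r powr (1 / real d)))\<^sup>2 * real m / C)"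
proof -
  let ?\<rho> = "real r powr (1 / real d)"
  define q where "q = 2 * (real r)\<^sup>2 * real d / \<eta>"
  have "0 < ?\<rho>"
    using assms by simp
  have \<rho>2: "?\<rho>\<^sup>2 = real r powr (2 / real d)"
    using assms by (simp add: powr_power)
  have "1 * 1 \<le> (real r)\<^sup>2 * real d"
    using assms by (intro mult_mono one_le_power) auto
  with assms have "\<eta> \<le> (real r)\<^sup>2 * real d"
    by linarith
  then have "0 < q"
    unfolding q_def using assms by simp
  have key: "2 * ln q \<le> (\<epsilon> / (36 * real d * ?\<rho>))\<^sup>2 * real m / C"
  proof -
    have "2 * ln q * C = (\<epsilon> / (36 * real d * ?\<rho>))\<^sup>2 * (2592 * C * ?\<rho>\<^sup>2 * (real d)\<^sup>2 / \<epsilon>\<^sup>2 * ln q)"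
      using assms \<open>0 < ?\<rho>\<close> by (simp add: field_simps power2_eq_square)
    also have "\<dots> \<le> (\<epsilon> / (36 * real d * ?\<rho>))\<^sup>2 * real m"
      using m unfolding \<rho>2 q_def by (intro mult_left_mono) auto
    finally show ?thesis
      using \<open>0 < C\<close> by (simp only: pos_le_divide_eq)
  qed
  have "4 * (real r)\<^sup>2 * 1 \<le> 4 * (real r)\<^sup>2 * ((real r)\<^sup>2 * real d / \<eta>)"
    using \<open>\<eta> \<le> (real r)\<^sup>2 * real d\<close> assms by (intro mult_left_mono) auto
  also have "\<dots> = \<eta> / real d * q\<^sup>2"
    unfolding q_def using assms by (simp add: field_simps power2_eq_square)
  also have "\<dots> = \<eta> / real d * exp (2 * ln q)"
    using \<open>0 < q\<close> by (simp add: exp_double)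
  also have "\<dots> \<le> \<eta> / real d * exp ((\<epsilon> / (36 * real d * ?\<rho>))\<^sup>2 * real m / C)"
    using key assms by (intro mult_left_mono) auto
  finally show ?thesis
    by simp
qed

lemma modewise_JL_embedding_of_outer_sums:
  fixes C \<epsilon> \<eta> :: real and d r :: nat and n m :: "nat \<Rightarrow> nat" and y :: "nat \<Rightarrow> nat \<Rightarrow> cvec"
    and D :: "nat \<Rightarrow> nat \<Rightarrow> cmat measure"
  assumes \<epsilon>: "0 < \<epsilon>" "\<epsilon> < 1/2" and \<eta>: "0 < \<eta>" "\<eta> < 1/2" and d: "2 \<le> d"
    and unit: "\<forall>l<d. \<forall>k<r. vnorm_sq (n l) (y l k) = 1"
    and coh: "coherence n d r y ^ (d - 1) < 1 / (2 * real r)"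
    and opt: "eta_optimal_with C (\<eta> / real d) D"
    and mn: "\<forall>j<d. m j < n j"
    and m: "\<forall>j<d. real (m j) \<ge> 2592 * C * real r powr (2 / real d) * (real d)\<^sup>2 / \<epsilon>\<^sup>2
                              * ln (2 * (real r)\<^sup>2 * real d / \<eta>)"
  shows "holds_with_prob_ge (PiM {..<d} (\<lambda>j. D (m j) (n j)))
           (\<lambda>A. \<forall>c. \<bar>tnorm_sq m d (modes_prod (outer_sum d r c y) n A d) - tnorm_sq n d (outer_sum d r c y)\<bar>
                    \<le> \<epsilon> * tnorm_sq n d (outer_sum d r c y))
           (1 - \<eta>)"
proof -
  have "0 < C" and prob: "\<And>a b. prob_space (D a b)"
    using opt unfolding eta_optimal_with_def by auto
  have "0 < r"
    using coh by (rule coherence_bound_imp_pos)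
  \<comment> \<open>\<open>2592 = 2 * 36\<^sup>2\<close> is what makes \<open>e\<^sup>2 * m j / C \<ge> 2 * ln (2 * r\<^sup>2 * d / \<eta>)\<close>.\<close>
  define e where "e = \<epsilon> / (36 * real d * real r powr (1 / real d))"
  have "1 \<le> real r powr (1 / real d)"
    using \<open>0 < r\<close> by (intro ge_one_powr_ge_zero) auto
  then have "1 * 1 \<le> real d * real r powr (1 / real d)"
    using d by (intro mult_mono) auto
  then have "0 < e" "e < 1"
    unfolding e_def using \<epsilon> by (auto simp: field_simps)
  have JL_modes: "holds_with_prob_ge (D (m l) (n l))
      (\<lambda>A. is_JL_embedding e (m l) (n l) A (polarization_set r (y l))) (1 - \<eta> / real d)" if "l < d" for l
  proof (rule eta_optimal_with_JL_polarization[OF opt \<open>0 < e\<close> \<open>e < 1\<close>])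
    show "m l < n l" "0 < r"
      using mn that \<open>0 < r\<close> by auto
    show "4 * (real r)\<^sup>2 \<le> \<eta> / real d * exp (e\<^sup>2 * real (m l) / C)"
      unfolding e_def using sample_size_imp_card_bound[of C \<epsilon> \<eta> d r "m l"] m that \<open>0 < C\<close> \<epsilon> \<eta> d \<open>0 < r\<close>
      by auto
  qed
  have "holds_with_prob_ge (PiM {..<d} (\<lambda>j. D (m j) (n j)))
      (\<lambda>A. \<forall>l\<in>{..<d}. is_JL_embedding e (m l) (n l) (A l) (polarization_set r (y l)))
      (\<Prod>l<d. 1 - \<eta> / real d)"
    using prob JL_modes \<eta> d by (intro holds_with_prob_ge_PiM) (auto simp: field_simps)
  then show ?thesis
  proof (rule holds_with_prob_ge_mono)
    fix A
    assume "\<forall>l\<in>{..<d}. is_JL_embedding e (m l) (n l) (A l) (polarization_set r (y l))"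
    then show "\<forall>c. \<bar>tnorm_sq m d (modes_prod (outer_sum d r c y) n A d) - tnorm_sq n d (outer_sum d r c y)\<bar>
                    \<le> \<epsilon> * tnorm_sq n d (outer_sum d r c y)"
      using d \<epsilon> unit coh unfolding e_def by (intro allI JL_modes_imp_tnorm_sq_close) auto
  next
    have "1 + real d * (- \<eta> / real d) \<le> (1 + (- \<eta> / real d)) ^ d"
      using \<eta> d by (intro Bernoulli_inequality) (simp add: field_simps)
    then show "1 - \<eta> \<le> (\<Prod>l<d. 1 - \<eta> / real d)"
      using d by simp
  qed
qed

theorem corollary2:
  "\<forall>C>0. \<exists>Ct>0. \<forall>(\<epsilon>::real) (\<eta>::real) (d::nat) (n::nat \<Rightarrow> nat) (m::nat \<Rightarrow> nat) (r::nat)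
       (y::nat \<Rightarrow> nat \<Rightarrow> cvec) (D::nat \<Rightarrow> nat \<Rightarrow> cmat measure).
     0 < \<epsilon> \<and> \<epsilon> < 1/2 \<and> 0 < \<eta> \<and> \<eta> < 1/2 \<and> 2 \<le> d
     \<and> (\<forall>l<d. \<forall>k<r. vnorm_sq (n l) (y l k) = 1)
     \<and> (\<forall>c::nat \<Rightarrow> complex. (\<forall>i\<in>tidx n d. (\<Sum>k<r. c k * outer d (\<lambda>l. y l k) i) = 0)
            \<longrightarrow> (\<forall>k<r. c k = 0))
     \<and> coherence n d r y ^ (d - 1) < 1 / (2 * real r)
     \<and> eta_optimal_with C (\<eta> / real d) D
     \<and> (\<forall>j<d. m j < n j)
     \<and> (\<forall>j<d. real (m j) \<ge> Ct * real r powr (2 / real d) * (real d)\<^sup>2 / \<epsilon>\<^sup>2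
                              * ln (2 * (real r)\<^sup>2 * real d / \<eta>))
     \<longrightarrow> holds_with_prob_ge (PiM {..<d} (\<lambda>j. D (m j) (n j)))
           (\<lambda>A. \<forall>c::nat \<Rightarrow> complex.
              let Y = (\<lambda>i. \<Sum>k<r. c k * outer d (\<lambda>l. y l k) i) in
              \<bar>tnorm_sq m d (modes_prod Y n A d) - tnorm_sq n d Y\<bar> \<le> \<epsilon> * tnorm_sq n d Y)
           (1 - \<eta>)"
  apply (intro allI impI)
  subgoal for C
    apply (rule exI[of _ "2592 * C"])
    apply (intro conjI allI impI)
     apply simp
    apply (elim conjE)
    unfolding Let_def outer_sum_def[symmetric]
    by (rule modewise_JL_embedding_of_outer_sums)
  done

end
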